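(* Let $\mathbf{Z}=\{Z_{\mathbf{u}}\}_{\mathbf{u}\in\mathbb{R}^2}$ be a max-stable random field with unit Fréchet margins $F(z)=\exp(-z^{-1})$, $z>0$. Let $\mathbf{x}=\{\mathbf{x}_1,\ldots,\mathbf{x}_k\}$ and $\mathbf{y}=\{\mathbf{y}_1,\ldots,\mathbf{y}_s\}$ be two disjoint sets of locations in $\mathbb{R}^2$, and put $M(\mathbf{x})=\bigvee_{i=1}^k Z_{\mathbf{x}_i}$, $M(\mathbf{y})=\bigvee_{j=1}^s Z_{\mathbf{y}_j}$. For $\alpha>0,\beta>0$ define the generalized madogram $$\nu^{\alpha,\beta}(\mathbf{x},\mathbf{y})=\tfrac12 E\left|F^{\alpha}(M(\mathbf{x}))-F^{\beta}(M(\mathbf{y}))\right|.$$ Define, for $z_1,\ldots,z_{k+s}>0$, $$G_{\mathbf{x},\mathbf{y}}(z_1,\ldots,z_{k+s})=P\Big(\bigcap_{i=1}^k\{Z_{\mathbf{x}_i}\le z_i\}\cap\bigcap_{j=1}^s\{Z_{\mathbf{y}_j}\le z_{k+j}\}\Big),\qquad V_{\mathbf{x},\mathbf{y}}=-\ln G_{\mathbf{x},\mathbf{y}},$$ and similarly $V_{\mathbf{x}}(z_1,\ldots,z_k)=-\ln P(Z_{\mathbf{x}_1}\le z_1,\ldots,Z_{\mathbf{x}_k}\le z_k)$ and $V_{\mathbf{y}}(z_1,\ldots,z_s)=-\ln P(Z_{\mathbf{y}_1}\le z_1,\ldots,Z_{\mathbf{y}_s}\le z_s)$. Then for all $\alpha,\beta>0$,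 $$\nu^{\alpha,\beta}(\mathbf{x},\mathbf{y})=\frac{V_{\mathbf{x},\mathbf{y}}(\alpha,\ldots,\alpha,\beta,\ldots,\beta)}{1+V_{\mathbf{x},\mathbf{y}}(\alpha,\ldots,\alpha,\beta,\ldots,\beta)}-c(\alpha,\beta),$$ where in $V_{\mathbf{x},\mathbf{y}}(\alpha,\ldots,\alpha,\beta,\ldots,\beta)$ the first $k$ arguments equal $\alpha$ and the last $s$ equal $\beta$, and $$c(\alpha,\beta)=\frac12\left(\frac{V_{\mathbf{x}}(1,\ldots,1)}{\alpha+V_{\mathbf{x}}(1,\ldots,1)}+\frac{V_{\mathbf{y}}(1,\ldots,1)}{\beta+V_{\mathbf{y}}(1,\ldots,1)}\right).$$
   Context: A max-stable random field with unit Fréchet margins has finite-dimensional distributions that are multivariate extreme value distributions of the form $G(z_1,\ldots,z_m)=\exp(-V(z_1,\ldots,z_m))$, where the dependence function $V$ is homogeneous of order $-1$: $V(a z_1,\ldots,a z_m)=a^{-1}V(z_1,\ldots,z_m)$ for $a>0$. *)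

theory Defs
  imports "HOL-Probability.Probability"
begin

definition frechet_cdf :: "real \<Rightarrow> real" where
  "frechet_cdf z = (if 0 < z then exp (- 1 / z) else 0)"

definition joint_cdf :: "'a measure \<Rightarrow> ('i \<Rightarrow> 'a \<Rightarrow> real) \<Rightarrow> 'i list \<Rightarrow> (nat \<Rightarrow> real) \<Rightarrow> real" where
  "joint_cdf M Z us zs = measure M {\<omega> \<in> space M. \<forall>i<length us. Z (us ! i) \<omega> \<le> zs i}"

definition dep_fun :: "'a measure \<Rightarrow> ('i \<Rightarrow> 'a \<Rightarrow> real) \<Rightarrow> 'i list \<Rightarrow> (nat \<Rightarrow> real) \<Rightarrow> real" where
  "dep_fun M Z us zs = - ln (joint_cdf M Z us zs)"

text \<open>Max-stable random field with unit Frechet margins: every finite-dimensional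
  distribution is G = exp(-V) (so G > 0 at positive arguments) with V homogeneous of
  order -1.\<close>
definition max_stable_frechet :: "'a measure \<Rightarrow> ('i \<Rightarrow> 'a \<Rightarrow> real) \<Rightarrow> bool" where
  "max_stable_frechet M Z \<longleftrightarrow>
     (\<forall>u. Z u \<in> borel_measurable M) \<and>
     (\<forall>u z. 0 < z \<longrightarrow> measure M {\<omega> \<in> space M. Z u \<omega> \<le> z} = exp (- 1 / z)) \<and>
     (\<forall>us zs. (\<forall>i<length us. 0 < zs i) \<longrightarrow> 0 < joint_cdf M Z us zs) \<and>
     (\<forall>us zs a. (\<forall>i<length us. 0 < zs i) \<and> 0 < a \<longrightarrow>
        dep_fun M Z us (\<lambda>i. a * zs i) = dep_fun M Z us zs / a)"

definition field_max :: "('i \<Rightarrow> 'a \<Rightarrow> real) \<Rightarrow> 'i list \<Rightarrow> 'a \<Rightarrow> real" where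
  "field_max Z us \<omega> = Max ((\<lambda>u. Z u \<omega>) ` set us)"

definition gen_madogram :: "'a measure \<Rightarrow> ('i \<Rightarrow> 'a \<Rightarrow> real) \<Rightarrow> real \<Rightarrow> real \<Rightarrow> 'i list \<Rightarrow> 'i list \<Rightarrow> real" where
  "gen_madogram M Z \<alpha> \<beta> xs ys =
     1/2 * (\<integral>\<omega>. \<bar>frechet_cdf (field_max Z xs \<omega>) powr \<alpha> - frechet_cdf (field_max Z ys \<omega>) powr \<beta>\<bar> \<partial>M)"

end

theory Submission
  imports Defs
begin

text \<open>Put U = F(M(x))^\<alpha> and W = F(M(y))^\<beta>. Since |U - W| = 2 max(U, W) - U - W, the madogram
  is E max(U, W) - (E U + E W) / 2. All three variables live in [0, 1] and have power-law
  distribution functions: {U \<le> u} is the event that every Z_{x_i} lies below \<alpha> / (- ln u), whose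
  probability is u^(V_x(1,...,1) / \<alpha>) by homogeneity of V, and likewise
  P(max(U, W) \<le> u) = u^(V_{x,y}(\<alpha>,...,\<beta>)). A [0, 1]-valued variable with P(T \<le> u) = u^\<theta> has
  mean \<theta> / (\<theta> + 1), which gives the three expectations.\<close>

lemma nn_integral_layer_cake:
  assumes "sigma_finite_measure M" and [measurable]: "T \<in> borel_measurable M"
    and nonneg: "\<And>\<omega>. \<omega> \<in> space M \<Longrightarrow> 0 \<le> T \<omega>"
  shows "(\<integral>\<^sup>+\<omega>. ennreal (T \<omega>) \<partial>M)
         = (\<integral>\<^sup>+u. emeasure M {\<omega>\<in>space M. u < T \<omega>} * indicator {0..} u \<partial>lborel)"
proof -
  interpret pair_sigma_finite M lborel
    by (simp add: assms(1) lborel.sigma_finite_measure_axioms pair_sigma_finite.intro)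
  have "(\<integral>\<^sup>+\<omega>. ennreal (T \<omega>) \<partial>M) = (\<integral>\<^sup>+\<omega>. (\<integral>\<^sup>+u. indicator {0..<T \<omega>} u \<partial>lborel) \<partial>M)"
    using nonneg by (intro nn_integral_cong) simp
  also have "\<dots> = (\<integral>\<^sup>+u. (\<integral>\<^sup>+\<omega>. indicator {0..<T \<omega>} u \<partial>M) \<partial>lborel)"
  proof (rule Fubini'[symmetric])
    have "(\<lambda>(\<omega>, u). if 0 \<le> u \<and> u < T \<omega> then 1 else 0 :: ennreal) \<in> borel_measurable (M \<Otimes>\<^sub>M lborel)"
      by measurable
    then show "(\<lambda>(\<omega>, u). indicator {0..<T \<omega>} u :: ennreal) \<in> borel_measurable (M \<Otimes>\<^sub>M lborel)"
      by (simp add: indicator_def case_prod_beta')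
  qed
  also have "\<dots> = (\<integral>\<^sup>+u. emeasure M {\<omega>\<in>space M. u < T \<omega>} * indicator {0..} u \<partial>lborel)"
  proof (intro nn_integral_cong)
    fix u :: real
    have "(\<integral>\<^sup>+\<omega>. indicator {0..<T \<omega>} u \<partial>M)
          = (\<integral>\<^sup>+\<omega>. indicator {\<omega>\<in>space M. u < T \<omega>} \<omega> * indicator {0..} u \<partial>M)"
      by (intro nn_integral_cong) (auto simp: indicator_def)
    then show "(\<integral>\<^sup>+\<omega>. indicator {0..<T \<omega>} u \<partial>M)
               = emeasure M {\<omega>\<in>space M. u < T \<omega>} * indicator {0..} u"
      by (simp add: nn_integral_multc)
  qed
  finally show ?thesis .
qed

lemma (in prob_space) expectation_eq_if_cdf_powr:
  assumes [measurable]: "T \<in> borel_measurable M"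
    and range: "\<And>\<omega>. \<omega> \<in> space M \<Longrightarrow> 0 \<le> T \<omega> \<and> T \<omega> \<le> 1"
    and "0 \<le> \<theta>"
    and cdf: "\<And>u. 0 < u \<Longrightarrow> u < 1 \<Longrightarrow> prob {\<omega>\<in>space M. T \<omega> \<le> u} = u powr \<theta>"
  shows "expectation T = \<theta> / (\<theta> + 1)"
proof -
  define tail where "tail u = 1 - u powr \<theta>" for u :: real
  have tail_AE: "AE u in lborel. emeasure M {\<omega>\<in>space M. u < T \<omega>} * indicator {0..} u
                                 = ennreal (tail u) * indicator {0..1} u"
    using AE_lborel_singleton[of 0]
  proof eventually_elim
    case (elim u)
    show ?case
    proof (cases "0 < u \<and> u < 1")
      case True
      then have "{\<omega>\<in>space M. u < T \<omega>} = space M - {\<omega>\<in>space M. T \<omega> \<le> u}" by auto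
      with True show ?thesis by (simp add: emeasure_eq_measure prob_compl cdf tail_def)
    next
      case False
      with elim consider "u < 0" | "1 \<le> u" by linarith
      then show ?thesis
      proof cases
        case 2
        with range have empty: "{\<omega>\<in>space M. u < T \<omega>} = {}" by force
        have "emeasure M {\<omega>\<in>space M. u < T \<omega>} = 0" unfolding empty by simp
        with 2 show ?thesis by (cases "u = 1") (simp_all add: indicator_def tail_def)
      qed (simp add: indicator_def)
    qed
  qed
  have "(tail has_integral (1 - 1 / (\<theta> + 1))) {0..1}"
    unfolding tail_def
    using has_integral_diff[OF has_integral_const_real[of 1 0 1] has_integral_powr_from_0[of \<theta> 1]]
      \<open>0 \<le> \<theta>\<close> by simp
  moreover have "0 \<le> tail u" if "u \<in> {0..1}" for u
    using that \<open>0 \<le> \<theta>\<close> powr_mono2[of \<theta> u 1] by (simp add: tail_def)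
  ultimately have "(\<integral>\<^sup>+u. ennreal (tail u) * indicator {0..1} u \<partial>lborel) = ennreal (1 - 1 / (\<theta> + 1))"
    by (intro nn_integral_has_integral_lebesgue')
  then have "(\<integral>\<^sup>+\<omega>. ennreal (T \<omega>) \<partial>M) = ennreal (\<theta> / (\<theta> + 1))"
    using \<open>0 \<le> \<theta>\<close> range
    by (simp add: nn_integral_layer_cake[OF sigma_finite_measure_axioms] nn_integral_cong_AE[OF tail_AE]
        diff_divide_eq_iff)
  moreover have "expectation T = enn2real (\<integral>\<^sup>+\<omega>. ennreal (T \<omega>) \<partial>M)"
    using range by (intro integral_eq_nn_integral) auto
  ultimately show ?thesis using \<open>0 \<le> \<theta>\<close> by simp
qed

lemma integral_abs_diff_eq_max:
  fixes U W :: "'a \<Rightarrow> real"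
  assumes "integrable M U" and "integrable M W"
  shows "1/2 * (\<integral>\<omega>. \<bar>U \<omega> - W \<omega>\<bar> \<partial>M)
         = (\<integral>\<omega>. max (U \<omega>) (W \<omega>) \<partial>M) - 1/2 * (integral\<^sup>L M U + integral\<^sup>L M W)"
proof -
  have "(\<integral>\<omega>. \<bar>U \<omega> - W \<omega>\<bar> \<partial>M) = (\<integral>\<omega>. 2 * max (U \<omega>) (W \<omega>) - U \<omega> - W \<omega> \<partial>M)"
    by (intro Bochner_Integration.integral_cong) auto
  also have "\<dots> = 2 * (\<integral>\<omega>. max (U \<omega>) (W \<omega>) \<partial>M) - integral\<^sup>L M U - integral\<^sup>L M W"
    using assms by simp
  finally show ?thesis by (simp add: algebra_simps)
qed

lemma all_less_add_iff:
  fixes m n :: nat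
  shows "(\<forall>i<m + n. Q i) \<longleftrightarrow> (\<forall>i<m. Q i) \<and> (\<forall>j<n. Q (m + j))"
proof
  assume "(\<forall>i<m. Q i) \<and> (\<forall>j<n. Q (m + j))"
  then show "\<forall>i<m + n. Q i"
    by (metis add_diff_inverse_nat nat_add_left_cancel_less)
qed auto

lemma all_nth_append_if_iff:
  "(\<forall>i<length (xs @ ys). P ((xs @ ys) ! i) (if i < length xs then a else b))
     \<longleftrightarrow> (\<forall>x\<in>set xs. P x a) \<and> (\<forall>y\<in>set ys. P y b)"
  by (simp add: all_less_add_iff nth_append all_set_conv_all_nth)

lemma frechet_cdf_powr_le_iff:
  assumes "0 < a" and "0 < u" and "u < 1"
  shows "frechet_cdf m powr a \<le> u \<longleftrightarrow> m \<le> a / - ln u"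
proof (cases "0 < m")
  case True
  have "frechet_cdf m powr a = exp (- a / m)"
    using True by (simp add: frechet_cdf_def powr_def)
  also have "\<dots> \<le> u \<longleftrightarrow> - a / m \<le> ln u"
    using \<open>0 < u\<close> by (metis exp_le_cancel_iff exp_ln)
  also have "\<dots> \<longleftrightarrow> m \<le> a / - ln u"
    using True assms by (simp add: field_simps)
  finally show ?thesis .
next
  case False
  moreover have "0 < a / - ln u" using assms by (intro divide_pos_pos) simp_all
  ultimately show ?thesis using \<open>0 < u\<close> by (simp add: frechet_cdf_def)
qed

lemma frechet_cdf_powr_bounds:
  assumes "0 \<le> a"
  shows "0 \<le> frechet_cdf m powr a" and "frechet_cdf m powr a \<le> 1"
  using assms powr_mono2[of a "frechet_cdf m" 1] by (auto simp: frechet_cdf_def)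

lemma field_max_le_iff:
  assumes "us \<noteq> []"
  shows "field_max Z us \<omega> \<le> c \<longleftrightarrow> (\<forall>u\<in>set us. Z u \<omega> \<le> c)"
  using assms by (simp add: field_max_def)

lemma borel_measurable_field_max [measurable]:
  assumes "\<And>u. Z u \<in> borel_measurable M"
  shows "field_max Z us \<in> borel_measurable M"
  using assms unfolding field_max_def by measurable

lemma borel_measurable_frechet_cdf [measurable]: "frechet_cdf \<in> borel_measurable borel"
  unfolding frechet_cdf_def by measurable

lemma
  assumes "max_stable_frechet M Z"
  shows max_stable_frechet_measurable: "Z u \<in> borel_measurable M"
    and max_stable_frechet_joint_cdf_pos:
      "(\<And>i. i < length us \<Longrightarrow> 0 < zs i) \<Longrightarrow> 0 < joint_cdf M Z us zs"
    and max_stable_frechet_dep_fun_homogeneous: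
      "(\<And>i. i < length us \<Longrightarrow> 0 < zs i) \<Longrightarrow> 0 < c \<Longrightarrow>
         dep_fun M Z us (\<lambda>i. c * zs i) = dep_fun M Z us zs / c"
  using assms unfolding max_stable_frechet_def by blast+

lemma dep_fun_nonneg:
  assumes "prob_space M" and "0 < joint_cdf M Z us zs"
  shows "0 \<le> dep_fun M Z us zs"
proof -
  have "joint_cdf M Z us zs \<le> 1"
    unfolding joint_cdf_def using prob_space.prob_le_1[OF assms(1)] by blast
  with assms(2) show ?thesis by (simp add: dep_fun_def)
qed

lemma joint_cdf_ray_eq_powr:
  assumes "max_stable_frechet M Z" and "\<And>i. i < length us \<Longrightarrow> 0 < zs i"
    and "0 < u" and "u < 1"
  shows "joint_cdf M Z us (\<lambda>i. zs i / - ln u) = u powr dep_fun M Z us zs"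
proof -
  have L: "0 < 1 / - ln u" using assms(3,4) by simp
  have "0 < joint_cdf M Z us (\<lambda>i. (1 / - ln u) * zs i)"
    using assms(2) L by (intro max_stable_frechet_joint_cdf_pos[OF assms(1)] mult_pos_pos)
  then have "joint_cdf M Z us (\<lambda>i. zs i / - ln u) = exp (- dep_fun M Z us (\<lambda>i. (1 / - ln u) * zs i))"
    by (simp add: dep_fun_def)
  also have "\<dots> = u powr dep_fun M Z us zs"
    using max_stable_frechet_dep_fun_homogeneous[OF assms(1,2) L] assms(3)
    by (simp add: powr_def)
  finally show ?thesis .
qed

lemma prob_frechet_powr_field_max_le:
  assumes "max_stable_frechet M Z" and "us \<noteq> []" and "0 < a" and "0 < u" and "u < 1"
  shows "measure M {\<omega>\<in>space M. frechet_cdf (field_max Z us \<omega>) powr a \<le> u}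
         = u powr (dep_fun M Z us (\<lambda>_. 1) / a)"
proof -
  have "{\<omega>\<in>space M. frechet_cdf (field_max Z us \<omega>) powr a \<le> u}
        = {\<omega>\<in>space M. \<forall>i<length us. Z (us ! i) \<omega> \<le> a / - ln u}"
    using assms by (simp add: frechet_cdf_powr_le_iff field_max_le_iff all_set_conv_all_nth)
  then have "measure M {\<omega>\<in>space M. frechet_cdf (field_max Z us \<omega>) powr a \<le> u}
             = joint_cdf M Z us (\<lambda>_. a / - ln u)"
    by (simp add: joint_cdf_def)
  also have "\<dots> = u powr dep_fun M Z us (\<lambda>_. a)"
    using assms by (intro joint_cdf_ray_eq_powr) auto
  also have "dep_fun M Z us (\<lambda>_. a) = dep_fun M Z us (\<lambda>_. 1) / a"
    using max_stable_frechet_dep_fun_homogeneous[OF assms(1), of us "\<lambda>_. 1" a] assms(3) by simp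
  finally show ?thesis .
qed

lemma prob_max_frechet_powr_field_max_le:
  assumes "max_stable_frechet M Z" and "xs \<noteq> []" and "ys \<noteq> []"
    and "0 < a" and "0 < b" and "0 < u" and "u < 1"
  shows "measure M {\<omega>\<in>space M. max (frechet_cdf (field_max Z xs \<omega>) powr a)
                                    (frechet_cdf (field_max Z ys \<omega>) powr b) \<le> u}
         = u powr dep_fun M Z (xs @ ys) (\<lambda>i. if i < length xs then a else b)"
proof -
  define zs where "zs = (\<lambda>i. if i < length xs then a else b)"
  have "{\<omega>\<in>space M. max (frechet_cdf (field_max Z xs \<omega>) powr a)
                        (frechet_cdf (field_max Z ys \<omega>) powr b) \<le> u}
        = {\<omega>\<in>space M. \<forall>i<length (xs @ ys). Z ((xs @ ys) ! i) \<omega> \<le> zs i / - ln u}"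
    using assms all_nth_append_if_iff[where P = "\<lambda>v c. Z v _ \<le> c / - ln u"]
    by (simp add: zs_def frechet_cdf_powr_le_iff field_max_le_iff)
  then have "measure M {\<omega>\<in>space M. max (frechet_cdf (field_max Z xs \<omega>) powr a)
                                       (frechet_cdf (field_max Z ys \<omega>) powr b) \<le> u}
             = joint_cdf M Z (xs @ ys) (\<lambda>i. zs i / - ln u)"
    by (simp add: joint_cdf_def)
  also have "\<dots> = u powr dep_fun M Z (xs @ ys) zs"
    using assms by (intro joint_cdf_ray_eq_powr) (auto simp: zs_def)
  finally show ?thesis unfolding zs_def .
qed

lemma (in prob_space) integrable_frechet_powr_field_max:
  assumes "\<And>u. Z u \<in> borel_measurable M" and "0 \<le> a"
  shows "integrable M (\<lambda>\<omega>. frechet_cdf (field_max Z us \<omega>) powr a)"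
  using assms frechet_cdf_powr_bounds[OF assms(2)]
  by (intro integrable_const_bound[where B = 1]) auto

lemma (in prob_space) expectation_frechet_powr_field_max:
  assumes "max_stable_frechet M Z" and "us \<noteq> []" and "0 < a"
  shows "expectation (\<lambda>\<omega>. frechet_cdf (field_max Z us \<omega>) powr a)
         = dep_fun M Z us (\<lambda>_. 1) / (a + dep_fun M Z us (\<lambda>_. 1))"
proof -
  have [measurable]: "Z u \<in> borel_measurable M" for u
    using max_stable_frechet_measurable[OF assms(1)] .
  have V: "0 \<le> dep_fun M Z us (\<lambda>_. 1)"
    by (intro dep_fun_nonneg prob_space_axioms max_stable_frechet_joint_cdf_pos[OF assms(1)]) simp
  with assms have "expectation (\<lambda>\<omega>. frechet_cdf (field_max Z us \<omega>) powr a)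
        = (dep_fun M Z us (\<lambda>_. 1) / a) / (dep_fun M Z us (\<lambda>_. 1) / a + 1)"
    by (intro expectation_eq_if_cdf_powr prob_frechet_powr_field_max_le conjI frechet_cdf_powr_bounds) auto
  with V \<open>0 < a\<close> show ?thesis by (simp add: field_simps)
qed

lemma (in prob_space) expectation_max_frechet_powr_field_max:
  assumes "max_stable_frechet M Z" and "xs \<noteq> []" and "ys \<noteq> []" and "0 < a" and "0 < b"
  shows "expectation (\<lambda>\<omega>. max (frechet_cdf (field_max Z xs \<omega>) powr a)
                                (frechet_cdf (field_max Z ys \<omega>) powr b))
         = dep_fun M Z (xs @ ys) (\<lambda>i. if i < length xs then a else b)
           / (1 + dep_fun M Z (xs @ ys) (\<lambda>i. if i < length xs then a else b))"
proof -
  have [measurable]: "Z u \<in> borel_measurable M" for u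
    using max_stable_frechet_measurable[OF assms(1)] .
  have "0 \<le> dep_fun M Z (xs @ ys) (\<lambda>i. if i < length xs then a else b)"
    using assms(4,5)
    by (intro dep_fun_nonneg prob_space_axioms max_stable_frechet_joint_cdf_pos[OF assms(1)]) simp
  with assms show ?thesis
    by (subst expectation_eq_if_cdf_powr[OF _ _ _ prob_max_frechet_powr_field_max_le])
       (auto simp: frechet_cdf_powr_bounds le_max_iff_disj)
qed

theorem proposition2p1:
  fixes M :: "'a measure" and Z :: "real^2 \<Rightarrow> 'a \<Rightarrow> real"
    and xs ys :: "(real^2) list" and \<alpha> \<beta> :: real
  assumes "prob_space M"
    and "max_stable_frechet M Z"
    and "xs \<noteq> []" and "ys \<noteq> []"
    and "distinct xs" and "distinct ys" and "set xs \<inter> set ys = {}"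
    and "0 < \<alpha>" and "0 < \<beta>"
  shows "gen_madogram M Z \<alpha> \<beta> xs ys =
           dep_fun M Z (xs @ ys) (\<lambda>i. if i < length xs then \<alpha> else \<beta>)
             / (1 + dep_fun M Z (xs @ ys) (\<lambda>i. if i < length xs then \<alpha> else \<beta>))
           - 1/2 * (dep_fun M Z xs (\<lambda>_. 1) / (\<alpha> + dep_fun M Z xs (\<lambda>_. 1))
                    + dep_fun M Z ys (\<lambda>_. 1) / (\<beta> + dep_fun M Z ys (\<lambda>_. 1)))"
proof -
  interpret prob_space M by fact
  have Z: "Z u \<in> borel_measurable M" for u
    using max_stable_frechet_measurable[OF assms(2)] .
  have "gen_madogram M Z \<alpha> \<beta> xs ys
        = expectation (\<lambda>\<omega>. max (frechet_cdf (field_max Z xs \<omega>) powr \<alpha>)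
                                 (frechet_cdf (field_max Z ys \<omega>) powr \<beta>))
          - 1/2 * (expectation (\<lambda>\<omega>. frechet_cdf (field_max Z xs \<omega>) powr \<alpha>)
                   + expectation (\<lambda>\<omega>. frechet_cdf (field_max Z ys \<omega>) powr \<beta>))"
    unfolding gen_madogram_def using assms(8,9)
    by (intro integral_abs_diff_eq_max integrable_frechet_powr_field_max Z) simp_all
  then show ?thesis
    using assms
    by (simp add: expectation_max_frechet_powr_field_max expectation_frechet_powr_field_max)
qed

end
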